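(* Let $\mathcal{X}$ be a finite alphabet with $|\mathcal{X}|=q$, let $P_0,P_1$ be probability mass functions on $\mathcal{X}$ with the same support $\mathcal{X}$, let $\varepsilon>0$, $n>1$, $k^\star\in(1,n]$, and let $\mathcal{D}=(x_1,\dots,x_n)$ have independent entries with $x_1,\dots,x_{k^\star-1}\sim P_0$ and $x_{k^\star},\dots,x_n\sim P_1$. The Offline RR-CPD estimator passes each $x_i$ independently through the randomized response mechanism $W^r$ to obtain $y_i$, lets $Q_j(y)=\sum_xP_j(x)W^r(y|x)$ ($j=0,1$), and outputs $\hat k\in\arg\max_{k\in[n]}\sum_{i=k}^n\log\frac{Q_1(y_i)}{Q_0(y_i)}$. Then this estimator is $\varepsilon$-locally differentially private and, for any $\alpha\in[n]$, $(\alpha,\beta_r)$-accurate with $$\beta_r\le2\min\Bigg\{\sum_{i=1}^{i^*}\exp\Big(\frac{-2^{i-1}\alpha C_r^2}{s_r^2}\Big);\ \Big(1-\frac{C_r}{2}\Big)^{\alpha/2}\Bigg\},$$ where $s_r=\min\{2\varepsilon;\ \tanh(\varepsilon/2)\,s\}$, $C_r=2\big(\frac{e^\varepsilon-1}{e^\varepsilon+q-1}\big)^2d_{\mathrm{TV}}^2(P_0,P_1)$, $s=\max_x\log\frac{P_1(x)}{P_0(x)}-\min_x\log\frac{P_1(x)}{P_0(x)}$, $i^*=\lceil\log_2(\frac{n-1}{\alpha})\rceil$, and $\tanh(\varepsilon/2)=\frac{e^\varepsilon-1}{e^\varepsilon+1}$.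
   Context: Randomized response: $W^r(y|x)=\frac{e^\varepsilon}{e^\varepsilon+q-1}$ if $y=x$ and $\frac{1}{e^\varepsilon+q-1}$ if $y\ne x$ (output alphabet $\mathcal{X}$). A procedure is $\varepsilon$-LDP if each data point is released through a mechanism $W$ with $W(S|x)\le e^\varepsilon W(S|x')$ for all $x,x'$ and output sets $S$. $(\alpha,\beta)$-accurate means $\mathbb{P}\{\hat k\notin[k^\star-\alpha,k^\star+\alpha]\}=\beta$. $d_{\mathrm{TV}}(P_0,P_1)=\frac12\sum_x|P_0(x)-P_1(x)|$. $[a]=\{1,\dots,a\}$; natural logarithms. *)

theory Defs
  imports "HOL-Probability.Probability"
begin

definition rr :: "real \<Rightarrow> 'a::finite \<Rightarrow> 'a pmf" where
  "rr \<epsilon> x = embed_pmf (\<lambda>y. if y = x then exp \<epsilon> / (exp \<epsilon> + real CARD('a) - 1)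
                              else 1 / (exp \<epsilon> + real CARD('a) - 1))"

definition ldp_mechanism :: "real \<Rightarrow> ('a \<Rightarrow> 'b pmf) \<Rightarrow> bool" where
  "ldp_mechanism \<epsilon> W \<longleftrightarrow>
     (\<forall>x x' S. measure_pmf.prob (W x) S \<le> exp \<epsilon> * measure_pmf.prob (W x') S)"

definition rr_out :: "real \<Rightarrow> 'a::finite pmf \<Rightarrow> 'a \<Rightarrow> real" where
  "rr_out \<epsilon> P y = (\<Sum>x\<in>UNIV. pmf P x * pmf (rr \<epsilon> x) y)"

definition cpd_score :: "real \<Rightarrow> 'a::finite pmf \<Rightarrow> 'a pmf \<Rightarrow> nat \<Rightarrow> (nat \<Rightarrow> 'a) \<Rightarrow> nat \<Rightarrow> real" where
  "cpd_score \<epsilon> P0 P1 n y k = (\<Sum>i\<in>{k..n}. ln (rr_out \<epsilon> P1 (y i) / rr_out \<epsilon> P0 (y i)))"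

definition cp_data :: "nat \<Rightarrow> nat \<Rightarrow> 'a pmf \<Rightarrow> 'a pmf \<Rightarrow> (nat \<Rightarrow> 'a) pmf" where
  "cp_data n kstar P0 P1 = Pi_pmf {1..n} undefined (\<lambda>i. if i < kstar then P0 else P1)"

definition privatize :: "nat \<Rightarrow> ('a \<Rightarrow> 'b pmf) \<Rightarrow> (nat \<Rightarrow> 'a) pmf \<Rightarrow> (nat \<Rightarrow> 'b) pmf" where
  "privatize n W D = bind_pmf D (\<lambda>x. Pi_pmf {1..n} undefined (\<lambda>i. W (x i)))"

definition tv_dist :: "'a::finite pmf \<Rightarrow> 'a pmf \<Rightarrow> real" where
  "tv_dist P0 P1 = (1/2) * (\<Sum>x\<in>UNIV. \<bar>pmf P0 x - pmf P1 x\<bar>)"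

definition llr_span :: "'a::finite pmf \<Rightarrow> 'a pmf \<Rightarrow> real" where
  "llr_span P0 P1 = Max (range (\<lambda>x. ln (pmf P1 x / pmf P0 x)))
                  - Min (range (\<lambda>x. ln (pmf P1 x / pmf P0 x)))"

end

theory Submission
  imports Defs
begin

(*
  Each privatised sample is distributed as Q0 or Q1, the images of P0 and P1 under randomized
  response, and the estimator is the maximum-likelihood change point for Q0, Q1.  If it lands
  more than alpha away from k*, the walk of log-likelihood ratios started at k* (to the right,
  or with negated increments to the left) is non-positive at some time beyond alpha.  Ville's
  maximal inequality for products of independent factors of mean at most 1 bounds this event:
  tilting with Hoeffding's lemma gives exp(-2 (alpha+1) KL^2 / s_r^2), and the half-moment gives
  BC^(alpha+1), where KL >= 2 TV^2 (Pinsker) and BC^2 <= 1 - TV^2 (Cauchy-Schwarz) for the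
  Bhattacharyya coefficient BC.  Randomized response scales TV by (e^eps - 1)/(e^eps + q - 1)
  and the oscillation of the output log-likelihood ratio is at most 2 eps and at most
  tanh(eps/2) times the oscillation s of the input one.
*)

section \<open>Randomized response\<close>

lemma rr_normalizer_pos: "exp (\<epsilon>::real) + real CARD('a::finite) - 1 > 0"
proof -
  have "real CARD('a) \<ge> 1" by (simp add: Suc_le_eq)
  then show ?thesis using exp_gt_zero[of \<epsilon>] by linarith
qed

lemma pmf_rr:
  fixes x y :: "'a::finite"
  shows "pmf (rr \<epsilon> x) y =
    (if y = x then exp \<epsilon> else 1) / (exp \<epsilon> + real CARD('a) - 1)"
proof -
  let ?N = "exp \<epsilon> + real CARD('a) - 1"
  have N: "?N > 0" by (rule rr_normalizer_pos)
  have "(\<Sum>y\<in>UNIV. (if y = x then exp \<epsilon> / ?N else 1 / ?N)) = exp \<epsilon> / ?N + (real CARD('a) - 1) / ?N"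
    by (simp add: sum.remove[of _ x] card_Diff_singleton)
  also have "\<dots> = 1" using N by (simp add: add_divide_distrib[symmetric])
  finally have "(\<Sum>y\<in>UNIV. (if y = x then exp \<epsilon> / ?N else 1 / ?N)) = 1" .
  then have "pmf (rr \<epsilon> x) y = (if y = x then exp \<epsilon> / ?N else 1 / ?N)"
    unfolding rr_def using N
    by (subst pmf_embed_pmf) (auto simp: nn_integral_count_space_finite)
  then show ?thesis by simp
qed

lemma ldp_mechanism_rr:
  assumes "\<epsilon> \<ge> 0"
  shows "ldp_mechanism \<epsilon> (rr \<epsilon> :: 'a::finite \<Rightarrow> 'a pmf)"
  unfolding ldp_mechanism_def
proof (intro allI)
  fix x x' :: 'a and S :: "'a set"
  have E: "1 \<le> exp \<epsilon>" using assms by simp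
  have "(if y = x then exp \<epsilon> else 1) \<le> exp \<epsilon> * (if y = x' then exp \<epsilon> else 1)" for y
    using E by (auto intro: order_trans[OF E])
  then have "pmf (rr \<epsilon> x) y \<le> exp \<epsilon> * pmf (rr \<epsilon> x') y" for y
    unfolding pmf_rr times_divide_eq_right
    by (intro divide_right_mono) (use rr_normalizer_pos[of \<epsilon>, where 'a='a] in auto)
  then show "measure_pmf.prob (rr \<epsilon> x) S \<le> exp \<epsilon> * measure_pmf.prob (rr \<epsilon> x') S"
    by (simp add: measure_measure_pmf_finite sum_distrib_left sum_mono)
qed

lemma pmf_bind_rr: "pmf (bind_pmf P (rr \<epsilon>)) y = rr_out \<epsilon> P y"
  unfolding pmf_bind rr_out_def
  by (subst integral_measure_pmf_real[of UNIV]) (auto simp: mult.commute)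

lemma rr_out_eq:
  fixes P :: "'a::finite pmf"
  shows "rr_out \<epsilon> P y = (1 + (exp \<epsilon> - 1) * pmf P y) / (exp \<epsilon> + real CARD('a) - 1)"
proof -
  have "(\<Sum>x\<in>UNIV. pmf P x * (if y = x then exp \<epsilon> else 1)) = (\<Sum>x\<in>UNIV. pmf P x) + (exp \<epsilon> - 1) * pmf P y"
    by (simp add: sum.remove[of _ y] algebra_simps)
  then show ?thesis
    by (simp add: rr_out_def pmf_rr sum_divide_distrib[symmetric] sum_pmf_eq_1)
qed

lemma pmf_bind_rr_eq:
  fixes P :: "'a::finite pmf"
  shows "pmf (bind_pmf P (rr \<epsilon>)) y = (1 + (exp \<epsilon> - 1) * pmf P y) / (exp \<epsilon> + real CARD('a) - 1)"
  by (simp add: pmf_bind_rr rr_out_eq)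

lemma pmf_bind_rr_pos: "pmf (bind_pmf P (rr \<epsilon>)) y > 0"
proof -
  have "1 + (exp \<epsilon> - 1) * pmf P y = (1 - pmf P y) + exp \<epsilon> * pmf P y"
    by (simp add: algebra_simps)
  also have "\<dots> > 0"
    using pmf_le_1[of P y] pmf_nonneg[of P y]
    by (cases "pmf P y = 1") (auto intro: add_nonneg_pos add_pos_nonneg)
  finally show ?thesis
    using rr_normalizer_pos[of \<epsilon>, where 'a='a] by (simp add: pmf_bind_rr_eq)
qed

lemma tv_dist_bind_rr:
  fixes P0 P1 :: "'a::finite pmf"
  assumes "\<epsilon> \<ge> 0"
  shows "tv_dist (bind_pmf P0 (rr \<epsilon>)) (bind_pmf P1 (rr \<epsilon>))
           = (exp \<epsilon> - 1) / (exp \<epsilon> + real CARD('a) - 1) * tv_dist P0 P1"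
proof -
  define c where "c = (exp \<epsilon> - 1) / (exp \<epsilon> + real CARD('a) - 1)"
  have "c \<ge> 0"
    using assms rr_normalizer_pos[of \<epsilon>, where 'a='a] by (simp add: c_def)
  have "pmf (bind_pmf P0 (rr \<epsilon>)) y - pmf (bind_pmf P1 (rr \<epsilon>)) y = c * (pmf P0 y - pmf P1 y)" for y
    by (simp add: c_def pmf_bind_rr_eq algebra_simps flip: diff_divide_distrib)
  then show ?thesis
    unfolding c_def[symmetric] using \<open>c \<ge> 0\<close> by (simp add: tv_dist_def abs_mult sum_distrib_left)
qed

lemma tv_dist_bind_rr_sq:
  fixes P0 P1 :: "'a::finite pmf"
  assumes "\<epsilon> \<ge> 0"
  shows "2 * ((exp \<epsilon> - 1) / (exp \<epsilon> + real CARD('a) - 1))\<^sup>2 * (tv_dist P0 P1)\<^sup>2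
           = 2 * (tv_dist (bind_pmf P0 (rr \<epsilon>)) (bind_pmf P1 (rr \<epsilon>)))\<^sup>2"
  using assms by (simp add: tv_dist_bind_rr power_mult_distrib power_divide)

lemma privatize_Pi_pmf:
  "privatize n W (Pi_pmf {1..n} undefined p) = Pi_pmf {1..n} undefined (\<lambda>i. bind_pmf (p i) W)"
  unfolding privatize_def by (rule Pi_pmf_bind[symmetric]) simp

lemma privatize_cp_data:
  "privatize n W (cp_data n kstar P0 P1)
     = Pi_pmf {1..n} undefined (\<lambda>i. if i < kstar then bind_pmf P0 W else bind_pmf P1 W)"
  unfolding cp_data_def privatize_Pi_pmf
  by (intro arg_cong[where f = "Pi_pmf {1..n} undefined"] ext) simp

section \<open>Divergences between finite distributions\<close>

definition llr :: "'a pmf \<Rightarrow> 'a pmf \<Rightarrow> 'a \<Rightarrow> real" where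
  "llr Q0 Q1 y = ln (pmf Q1 y / pmf Q0 y)"

definition kl_div :: "'a::finite pmf \<Rightarrow> 'a pmf \<Rightarrow> real" where
  "kl_div R S = (\<Sum>y\<in>UNIV. pmf R y * ln (pmf R y / pmf S y))"

definition bhattacharyya :: "'a::finite pmf \<Rightarrow> 'a pmf \<Rightarrow> real" where
  "bhattacharyya R S = (\<Sum>y\<in>UNIV. sqrt (pmf R y * pmf S y))"

lemma llr_swap: "pmf Q0 y > 0 \<Longrightarrow> pmf Q1 y > 0 \<Longrightarrow> llr Q1 Q0 y = - llr Q0 Q1 y"
  by (simp add: llr_def ln_div)

lemma tv_dist_commute: "tv_dist P Q = tv_dist Q P"
  by (simp add: tv_dist_def abs_minus_commute)

lemma tv_dist_nonneg: "tv_dist P Q \<ge> 0"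
  by (simp add: tv_dist_def sum_nonneg)

lemma tv_dist_le_1: "tv_dist P Q \<le> 1"
proof -
  have "(\<Sum>x\<in>UNIV. \<bar>pmf P x - pmf Q x\<bar>) \<le> (\<Sum>x\<in>UNIV. pmf P x + pmf Q x)"
    by (intro sum_mono) (auto simp: abs_le_iff)
  then show ?thesis by (simp add: tv_dist_def sum.distrib sum_pmf_eq_1)
qed

lemma log_sum_inequality:
  fixes a b :: "'b \<Rightarrow> real"
  assumes "finite B" "B \<noteq> {}" and a: "\<And>y. y \<in> B \<Longrightarrow> a y > 0" and b: "\<And>y. y \<in> B \<Longrightarrow> b y > 0"
  shows "(\<Sum>y\<in>B. a y) * ln ((\<Sum>y\<in>B. a y) / (\<Sum>y\<in>B. b y)) \<le> (\<Sum>y\<in>B. a y * ln (a y / b y))"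
proof -
  define A where "A = (\<Sum>y\<in>B. a y)"
  define C where "C = (\<Sum>y\<in>B. b y)"
  have "A > 0" "C > 0" unfolding A_def C_def using assms by (auto intro!: sum_pos)
  have ln_lower: "1 - 1 / t \<le> ln t" if "t > 0" for t :: real
    using ln_le_minus_one[of "1 / t"] that by (simp add: ln_div)
  have "0 = (\<Sum>y\<in>B. a y - b y * (A / C))"
    using \<open>C > 0\<close> by (simp add: sum_subtractf A_def C_def flip: sum_distrib_right sum_divide_distrib)
  also have "\<dots> = (\<Sum>y\<in>B. a y * (1 - 1 / ((a y * C) / (b y * A))))"
    using \<open>A > 0\<close> \<open>C > 0\<close> by (intro sum.cong) (auto simp: field_simps dest: a b)
  also have "\<dots> \<le> (\<Sum>y\<in>B. a y * ln ((a y * C) / (b y * A)))"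
    using a b \<open>A > 0\<close> \<open>C > 0\<close> by (intro sum_mono mult_left_mono ln_lower) (auto simp: less_imp_le)
  also have "\<dots> = (\<Sum>y\<in>B. a y * ln (a y / b y) - a y * ln (A / C))"
  proof (intro sum.cong refl)
    fix y assume "y \<in> B"
    with a b have "a y > 0" "b y > 0" by auto
    with \<open>A > 0\<close> \<open>C > 0\<close> show "a y * ln ((a y * C) / (b y * A)) = a y * ln (a y / b y) - a y * ln (A / C)"
      by (simp add: ln_div ln_mult algebra_simps)
  qed
  also have "\<dots> = (\<Sum>y\<in>B. a y * ln (a y / b y)) - A * ln (A / C)"
    by (simp add: A_def sum_subtractf sum_distrib_right)
  finally show ?thesis by (simp add: A_def C_def)
qed

lemma binary_pinsker:
  fixes p q :: real
  assumes q: "0 < q" and qp: "q \<le> p" and p: "p < 1"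
  shows "2 * (p - q)\<^sup>2 \<le> p * ln (p / q) + (1 - p) * ln ((1 - p) / (1 - q))"
proof -
  define f where "f x = p * (ln p - ln x) + (1 - p) * (ln (1 - p) - ln (1 - x)) - 2 * (p - x)\<^sup>2" for x
  have "f p \<le> f q"
  proof (rule DERIV_nonpos_imp_nonincreasing[OF qp])
    fix x assume x: "q \<le> x" "x \<le> p"
    then have "0 < x" "x < 1" using q p by auto
    then have "DERIV f x :> - p / x + (1 - p) / (1 - x) + 4 * (p - x)"
      unfolding f_def by (auto intro!: derivative_eq_intros)
    moreover have "- p / x + (1 - p) / (1 - x) + 4 * (p - x) = (p - x) * (4 - 1 / (x * (1 - x)))"
      using \<open>0 < x\<close> \<open>x < 1\<close> by (simp add: field_simps)
    moreover have "4 \<le> 1 / (x * (1 - x))"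
    proof -
      have "x * (1 - x) \<le> 1 / 4" using mult_const_minus_self_real_le[of x 1] by simp
      then show ?thesis using \<open>0 < x\<close> \<open>x < 1\<close> by (simp add: le_divide_eq)
    qed
    ultimately show "\<exists>y. DERIV f x :> y \<and> y \<le> 0"
      using x by (auto intro!: mult_nonneg_nonpos)
  qed
  then show ?thesis using q qp p by (simp add: f_def ln_div)
qed

lemma pinsker_inequality:
  fixes R S :: "'a::finite pmf"
  assumes R: "\<And>y. pmf R y > 0" and S: "\<And>y. pmf S y > 0"
  shows "2 * (tv_dist R S)\<^sup>2 \<le> kl_div R S"
proof -
  define B where "B = {y. pmf S y < pmf R y}"
  define p where "p = (\<Sum>y\<in>B. pmf R y)"
  define q where "q = (\<Sum>y\<in>B. pmf S y)"
  have split: "(\<Sum>y\<in>UNIV. f y) = (\<Sum>y\<in>B. f y) + (\<Sum>y\<in>-B. f y)" for f :: "'a \<Rightarrow> real"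
    by (metis Compl_eq_Diff_UNIV add.commute finite sum.subset_diff top_greatest)
  have compl: "(\<Sum>y\<in>-B. pmf R y) = 1 - p" "(\<Sum>y\<in>-B. pmf S y) = 1 - q"
    using split[of "pmf R"] split[of "pmf S"] by (simp_all add: sum_pmf_eq_1 p_def q_def)
  have "(\<Sum>y\<in>UNIV. \<bar>pmf R y - pmf S y\<bar>) = (\<Sum>y\<in>B. pmf R y - pmf S y) + (\<Sum>y\<in>-B. pmf S y - pmf R y)"
    unfolding split[of "\<lambda>y. \<bar>pmf R y - pmf S y\<bar>"] by (intro arg_cong2[where f = "(+)"] sum.cong) (auto simp: B_def)
  then have tv: "tv_dist R S = p - q"
    using compl by (simp add: tv_dist_def sum_subtractf p_def q_def)
  show ?thesis
  proof (cases "B = {}")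
    case True
    then have "p = q" by (simp add: p_def q_def)
    have "1 * ln (1 / 1) \<le> kl_div R S"
      using log_sum_inequality[of UNIV "pmf R" "pmf S"] R S by (simp add: kl_div_def sum_pmf_eq_1)
    then show ?thesis using tv \<open>p = q\<close> by simp
  next
    case False
    have "-B \<noteq> {}"
    proof
      assume "-B = {}"
      then have "(\<Sum>y\<in>UNIV. pmf S y) < (\<Sum>y\<in>UNIV. pmf R y)"
        by (intro sum_strict_mono) (auto simp: B_def)
      then show False by (simp add: sum_pmf_eq_1)
    qed
    have "q > 0" unfolding q_def using False S by (intro sum_pos) auto
    moreover have "q \<le> p" unfolding p_def q_def by (intro sum_mono) (auto simp: B_def)
    moreover have "p < 1" using compl(1) \<open>-B \<noteq> {}\<close> R sum_pos[of "-B" "pmf R"] by simp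
    ultimately have "2 * (p - q)\<^sup>2 \<le> p * ln (p / q) + (1 - p) * ln ((1 - p) / (1 - q))"
      by (rule binary_pinsker)
    also have "\<dots> \<le> kl_div R S"
      using log_sum_inequality[of B "pmf R" "pmf S"] log_sum_inequality[of "-B" "pmf R" "pmf S"]
        R S False \<open>-B \<noteq> {}\<close>
      by (simp add: kl_div_def split[of "\<lambda>y. pmf R y * ln (pmf R y / pmf S y)"] compl p_def q_def)
    finally show ?thesis using tv by simp
  qed
qed

lemma bhattacharyya_sq_le:
  fixes R S :: "'a::finite pmf"
  shows "(bhattacharyya R S)\<^sup>2 \<le> 1 - (tv_dist R S)\<^sup>2"
proof -
  define a where "a y = sqrt (pmf R y)" for y
  define b where "b y = sqrt (pmf S y)" for y
  define \<beta> where "\<beta> = bhattacharyya R S"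
  have a2: "(a y)\<^sup>2 = pmf R y" and b2: "(b y)\<^sup>2 = pmf S y" and "a y \<ge> 0" "b y \<ge> 0" for y
    by (simp_all add: a_def b_def)
  have \<beta>: "\<beta> = (\<Sum>y\<in>UNIV. a y * b y)"
    by (simp add: \<beta>_def bhattacharyya_def a_def b_def real_sqrt_mult)
  have "\<bar>pmf R y - pmf S y\<bar> = \<bar>a y - b y\<bar> * (a y + b y)" for y
  proof -
    have "pmf R y - pmf S y = (a y - b y) * (a y + b y)"
      unfolding a2[symmetric] b2[symmetric] by (simp add: power2_eq_square algebra_simps)
    then show ?thesis using \<open>a y \<ge> 0\<close> \<open>b y \<ge> 0\<close> by (simp add: abs_mult)
  qed
  then have "(2 * tv_dist R S)\<^sup>2 = (\<Sum>y\<in>UNIV. \<bar>a y - b y\<bar> * (a y + b y))\<^sup>2"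
    by (simp add: tv_dist_def)
  also have "\<dots> \<le> (\<Sum>y\<in>UNIV. \<bar>a y - b y\<bar>\<^sup>2) * (\<Sum>y\<in>UNIV. (a y + b y)\<^sup>2)"
    by (rule Cauchy_Schwarz_ineq_sum)
  also have "\<dots> = (2 - 2 * \<beta>) * (2 + 2 * \<beta>)"
    by (simp add: \<beta> power2_diff power2_sum a2 b2 sum.distrib sum_subtractf sum_pmf_eq_1
                  sum_distrib_left mult.assoc)
  finally show ?thesis by (simp add: \<beta>_def power2_eq_square algebra_simps)
qed

lemma sum_pmf_exp_half_llr:
  assumes "\<And>y. pmf Q y > 0" "\<And>y. pmf Q' y > 0"
  shows "(\<Sum>y\<in>UNIV. pmf Q y * exp (- llr Q' Q y / 2)) = bhattacharyya Q Q'"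
  unfolding bhattacharyya_def
proof (intro sum.cong refl)
  fix y
  have "exp (- llr Q' Q y / 2) = (pmf Q' y / pmf Q y) powr (1 / 2)"
    using assms[of y] by (simp add: llr_def powr_def ln_div)
  also have "\<dots> = sqrt (pmf Q' y) / sqrt (pmf Q y)"
    by (simp add: powr_half_sqrt real_sqrt_divide)
  finally show "pmf Q y * exp (- llr Q' Q y / 2) = sqrt (pmf Q y * pmf Q' y)"
    by (metis pmf_nonneg real_div_sqrt real_sqrt_mult times_divide_eq_left times_divide_eq_right)
qed

section \<open>Maximal inequalities for random walks\<close>

lemma measure_bind_pmf_finite:
  fixes Q :: "'a::finite pmf" and f :: "'a \<Rightarrow> 'b pmf"
  shows "measure_pmf.prob (bind_pmf Q f) S = (\<Sum>v\<in>UNIV. pmf Q v * measure_pmf.prob (f v) S)"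
proof -
  have "measure_pmf.prob (bind_pmf Q f) S = (\<integral>v. measure_pmf.prob (f v) S \<partial>measure_pmf Q)"
    unfolding measure_pmf_bind
    by (rule measure_pmf.measure_bind[where N = "count_space UNIV"])
       (auto simp: measurable_def space_subprob_algebra sets_measure_pmf_count_space
             measure_pmf_in_subprob_space subprob_space_measure_pmf)
  also have "\<dots> = (\<Sum>v\<in>UNIV. measure_pmf.prob (f v) S * pmf Q v)"
    by (rule integral_measure_pmf_real) auto
  finally show ?thesis by (simp add: mult.commute)
qed

lemma Pi_pmf_remove_bind:
  assumes "finite A" "i \<in> A"
  shows "Pi_pmf A d p = bind_pmf (p i) (\<lambda>v. map_pmf (\<lambda>f. f(i := v)) (Pi_pmf (A - {i}) d p))"
proof -
  have "Pi_pmf A d p = Pi_pmf (insert i (A - {i})) d p" using assms(2) by (simp add: insert_absorb)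
  also have "\<dots> = bind_pmf (p i) (\<lambda>v. map_pmf (\<lambda>f. f(i := v)) (Pi_pmf (A - {i}) d p))"
    using assms(1) by (subst Pi_pmf_insert') (auto simp: map_pmf_def)
  finally show ?thesis .
qed

definition prod_exceeds :: "nat list \<Rightarrow> ('a \<Rightarrow> real) \<Rightarrow> nat \<Rightarrow> real \<Rightarrow> real \<Rightarrow> (nat \<Rightarrow> 'a) set" where
  "prod_exceeds is g a w c = {y. \<exists>m. a \<le> m \<and> m \<le> length is \<and> c \<le> w * (\<Prod>j<m. g (y (is ! j)))}"

definition walk_hits_nonpos :: "nat list \<Rightarrow> ('a \<Rightarrow> real) \<Rightarrow> nat \<Rightarrow> (nat \<Rightarrow> 'a) set" where
  "walk_hits_nonpos is h a = {y. \<exists>m. a \<le> m \<and> m \<le> length is \<and> (\<Sum>j<m. h (y (is ! j))) \<le> 0}"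

lemma prod_exceeds_Nil: "prod_exceeds [] g a w c = (if a = 0 \<and> c \<le> w then UNIV else {})"
  by (auto simp: prod_exceeds_def)

lemma vimage_fun_upd_prod_exceeds_Cons:
  assumes "i \<notin> set is" "a \<noteq> 0 \<or> w < c"
  shows "(\<lambda>f. f(i := v)) -` prod_exceeds (i # is) g a w c = prod_exceeds is g (a - 1) (w * g v) c"
proof -
  have shift: "(\<Prod>j<Suc m. g ((f(i := v)) ((i # is) ! j))) = g v * (\<Prod>j<m. g (f (is ! j)))"
    if "m \<le> length is" for f m
  proof -
    have "is ! j \<noteq> i" if "j < m" for j using assms(1) \<open>m \<le> length is\<close> that nth_mem by fastforce
    then show ?thesis by (subst prod.lessThan_Suc_shift) simp
  qed
  show ?thesis
  proof (intro set_eqI iffI)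
    fix f assume "f \<in> (\<lambda>f. f(i := v)) -` prod_exceeds (i # is) g a w c"
    then obtain m where m: "a \<le> m" "m \<le> Suc (length is)"
      and c: "c \<le> w * (\<Prod>j<m. g ((f(i := v)) ((i # is) ! j)))"
      by (auto simp: prod_exceeds_def)
    then obtain m' where m': "m = Suc m'" using assms(2) by (cases m) auto
    with m(2) have "m' \<le> length is" by simp
    then have "c \<le> w * g v * (\<Prod>j<m'. g (f (is ! j)))"
      using c unfolding m' shift[OF \<open>m' \<le> length is\<close>] by (simp add: mult.assoc)
    then show "f \<in> prod_exceeds is g (a - 1) (w * g v) c"
      using m m' \<open>m' \<le> length is\<close> unfolding prod_exceeds_def by (auto intro!: exI[of _ m'])
  next
    fix f assume "f \<in> prod_exceeds is g (a - 1) (w * g v) c"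
    then obtain m where m: "a - 1 \<le> m" "m \<le> length is"
      and c: "c \<le> w * g v * (\<Prod>j<m. g (f (is ! j)))"
      by (auto simp: prod_exceeds_def)
    then have "c \<le> w * (\<Prod>j<Suc m. g ((f(i := v)) ((i # is) ! j)))"
      unfolding shift[OF m(2)] by (simp add: mult.assoc)
    then show "f \<in> (\<lambda>f. f(i := v)) -` prod_exceeds (i # is) g a w c"
      using m unfolding prod_exceeds_def by (auto intro!: exI[of _ "Suc m"])
  qed
qed

(* Ville's maximal inequality for the nonnegative supermartingale w * prod g (y j). *)
lemma prob_prod_exceeds_le:
  fixes p :: "nat \<Rightarrow> 'a::finite pmf"
  assumes "finite A" "distinct is" "set is \<subseteq> A" "\<forall>i\<in>set is. p i = Q"
    and g: "\<And>v. g v \<ge> 0" "(\<Sum>v\<in>UNIV. pmf Q v * g v) \<le> 1" and c: "c > 0" and "w \<ge> 0"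
  shows "measure_pmf.prob (Pi_pmf A d p) (prod_exceeds is g a w c)
           \<le> w * (\<Sum>v\<in>UNIV. pmf Q v * g v) ^ a / c"
  using assms(1-4,8)
proof (induction "is" arbitrary: A a w)
  case Nil
  have "(\<Sum>v\<in>UNIV. pmf Q v * g v) \<ge> 0" using g by (simp add: sum_nonneg)
  then show ?case using Nil.prems c by (auto simp: prod_exceeds_Nil)
next
  case (Cons i "is" A a w)
  let ?\<rho> = "\<Sum>v\<in>UNIV. pmf Q v * g v"
  show ?case
  proof (cases "a = 0 \<and> c \<le> w")
    case True
    have "measure_pmf.prob (Pi_pmf A d p) (prod_exceeds (i # is) g a w c) \<le> 1"
      by (rule measure_pmf.prob_le_1)
    also have "1 \<le> w * ?\<rho> ^ a / c" using True c by simp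
    finally show ?thesis .
  next
    case False
    define R where "R = Pi_pmf (A - {i}) d p"
    have "measure_pmf.prob (Pi_pmf A d p) (prod_exceeds (i # is) g a w c)
        = (\<Sum>v\<in>UNIV. pmf Q v * measure_pmf.prob R (prod_exceeds is g (a - 1) (w * g v) c))"
      using Cons.prems False
      by (simp add: Pi_pmf_remove_bind[of A i] measure_bind_pmf_finite
                    vimage_fun_upd_prod_exceeds_Cons R_def not_le)
    also have "\<dots> \<le> (\<Sum>v\<in>UNIV. pmf Q v * (w * g v * ?\<rho> ^ (a - 1) / c))"
      unfolding R_def using Cons.prems g
      by (intro sum_mono mult_left_mono Cons.IH) auto
    also have "\<dots> = w * ?\<rho> * ?\<rho> ^ (a - 1) / c"
      by (simp add: sum_divide_distrib sum_distrib_left sum_distrib_right mult_ac)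
    also have "\<dots> \<le> w * ?\<rho> ^ a / c"
    proof (cases a)
      case 0
      then show ?thesis using g Cons.prems c by (simp add: divide_right_mono mult_left_le)
    qed (simp add: mult_ac)
    finally show ?thesis .
  qed
qed

lemma prob_walk_hits_nonpos_le:
  fixes p :: "nat \<Rightarrow> 'a::finite pmf"
  assumes "finite A" "distinct is" "set is \<subseteq> A" "\<forall>i\<in>set is. p i = Q"
    and l: "l \<ge> 0" and \<kappa>: "\<kappa> \<ge> 0"
    and mgf: "(\<Sum>v\<in>UNIV. pmf Q v * exp (- l * h v)) \<le> exp (- \<kappa>)"
  shows "measure_pmf.prob (Pi_pmf A d p) (walk_hits_nonpos is h a) \<le> exp (- \<kappa> * a)"
proof -
  (* On the event, the tilted product exp (kappa * m - l * S_m) of factors with mean at most 1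
     exceeds exp (kappa * a). *)
  define g where "g v = exp (\<kappa> - l * h v)" for v
  have "(\<Sum>v\<in>UNIV. pmf Q v * g v) = exp \<kappa> * (\<Sum>v\<in>UNIV. pmf Q v * exp (- l * h v))"
    by (simp add: g_def exp_diff exp_minus field_simps sum_distrib_left sum_divide_distrib)
  also have "\<dots> \<le> 1" using mult_left_mono[OF mgf, of "exp \<kappa>"] by (simp add: exp_minus)
  finally have mean_g: "(\<Sum>v\<in>UNIV. pmf Q v * g v) \<le> 1" .
  have "walk_hits_nonpos is h a \<subseteq> prod_exceeds is g a 1 (exp (\<kappa> * a))"
  proof
    fix y assume "y \<in> walk_hits_nonpos is h a"
    then obtain m where m: "a \<le> m" "m \<le> length is" "(\<Sum>j<m. h (y (is ! j))) \<le> 0"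
      by (auto simp: walk_hits_nonpos_def)
    have "\<kappa> * a \<le> \<kappa> * m - l * (\<Sum>j<m. h (y (is ! j)))"
      using m l \<kappa> by (smt (verit) mult_left_mono mult_nonneg_nonpos of_nat_mono)
    also have "\<dots> = (\<Sum>j<m. \<kappa> - l * h (y (is ! j)))"
      by (simp add: sum_subtractf sum_distrib_left)
    finally have "exp (\<kappa> * a) \<le> (\<Prod>j<m. g (y (is ! j)))"
      by (simp add: g_def flip: exp_sum)
    then show "y \<in> prod_exceeds is g a 1 (exp (\<kappa> * a))"
      using m unfolding prod_exceeds_def by auto
  qed
  then have "measure_pmf.prob (Pi_pmf A d p) (walk_hits_nonpos is h a)
      \<le> measure_pmf.prob (Pi_pmf A d p) (prod_exceeds is g a 1 (exp (\<kappa> * a)))"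
    by (intro measure_pmf.finite_measure_mono) auto
  also have "\<dots> \<le> 1 * (\<Sum>v\<in>UNIV. pmf Q v * g v) ^ a / exp (\<kappa> * a)"
    by (rule prob_prod_exceeds_le) (use assms mean_g in \<open>auto simp: g_def\<close>)
  also have "\<dots> \<le> 1 / exp (\<kappa> * a)"
  proof -
    have "(\<Sum>v\<in>UNIV. pmf Q v * g v) ^ a \<le> 1"
      using mean_g by (intro power_le_one) (auto simp: g_def intro!: sum_nonneg)
    then show ?thesis by (simp add: divide_right_mono)
  qed
  finally show ?thesis by (simp add: exp_minus')
qed

lemma Hoeffdings_lemma_pmf:
  fixes Q :: "'a::finite pmf"
  assumes bounded: "\<And>v. lo \<le> f v \<and> f v \<le> hi" and l: "l > 0"
  shows "(\<Sum>v\<in>UNIV. pmf Q v * exp (l * (f v - (\<Sum>u\<in>UNIV. pmf Q u * f u))))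
           \<le> exp (l\<^sup>2 * (hi - lo)\<^sup>2 / 8)"
proof -
  interpret interval_bounded_random_variable "measure_pmf Q" f lo hi
    by unfold_locales (auto simp: bounded)
  have E: "measure_pmf.expectation Q f = (\<Sum>u\<in>UNIV. pmf Q u * f u)"
    by (subst integral_measure_pmf_real[of UNIV]) (auto simp: mult.commute)
  have "(\<integral>\<^sup>+x. ennreal (exp (l * (f x - measure_pmf.expectation Q f))) \<partial>measure_pmf Q)
      = ennreal (\<Sum>x\<in>UNIV. pmf Q x * exp (l * (f x - measure_pmf.expectation Q f)))"
    by (subst nn_integral_measure_pmf_support[of UNIV])
       (auto simp: ennreal_mult' mult.commute simp flip: sum_ennreal)
  with Hoeffdings_lemma_nn_integral[OF l] show ?thesis
    unfolding E by simp
qed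

lemma prob_walk_hits_nonpos_hoeffding:
  fixes p :: "nat \<Rightarrow> 'a::finite pmf"
  assumes "finite A" "distinct is" "set is \<subseteq> A" "\<forall>i\<in>set is. p i = Q"
    and osc: "\<And>v v'. h v - h v' \<le> s" and mean: "(\<Sum>v\<in>UNIV. pmf Q v * h v) \<ge> 0"
  shows "measure_pmf.prob (Pi_pmf A d p) (walk_hits_nonpos is h a)
           \<le> exp (- 2 * real a * (\<Sum>v\<in>UNIV. pmf Q v * h v)\<^sup>2 / s\<^sup>2)"
proof -
  define \<mu> where "\<mu> = (\<Sum>v\<in>UNIV. pmf Q v * h v)"
  define lo where "lo = Min (range h)"
  define hi where "hi = Max (range h)"
  have bounded: "lo \<le> h v \<and> h v \<le> hi" for v by (simp add: lo_def hi_def)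
  have "hi \<in> range h" "lo \<in> range h" unfolding hi_def lo_def by (auto intro: Max_in Min_in)
  then have s: "hi - lo \<le> s" using osc by auto
  have "s \<ge> 0" using osc[of undefined undefined] by simp
  show ?thesis
  proof (cases "\<mu> = 0 \<or> s = 0")
    case True
    then show ?thesis by (auto simp: \<mu>_def)
  next
    case False
    with mean \<open>s \<ge> 0\<close> have \<mu>: "\<mu> > 0" and "s > 0" by (auto simp: \<mu>_def)
    define l where "l = 4 * \<mu> / s\<^sup>2"
    have l: "l > 0" using \<mu> \<open>s > 0\<close> by (simp add: l_def)
    have "(\<Sum>v\<in>UNIV. pmf Q v * exp (- l * h v))
        = exp (- l * \<mu>) * (\<Sum>v\<in>UNIV. pmf Q v * exp (l * (- h v - (\<Sum>u\<in>UNIV. pmf Q u * - h u))))"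
      by (simp add: \<mu>_def sum_negf sum_distrib_left algebra_simps flip: exp_add)
    also have "\<dots> \<le> exp (- l * \<mu>) * exp (l\<^sup>2 * (- lo - - hi)\<^sup>2 / 8)"
      using bounded by (intro mult_left_mono Hoeffdings_lemma_pmf l) auto
    also have "\<dots> \<le> exp (- l * \<mu>) * exp (l\<^sup>2 * s\<^sup>2 / 8)"
      using bounded[of undefined] s by (auto intro!: mult_left_mono power_mono)
    also have "\<dots> = exp (- (2 * \<mu>\<^sup>2 / s\<^sup>2))"
      using \<open>s > 0\<close> by (simp add: l_def power2_eq_square field_simps flip: exp_add)
    finally have "measure_pmf.prob (Pi_pmf A d p) (walk_hits_nonpos is h a) \<le> exp (- (2 * \<mu>\<^sup>2 / s\<^sup>2) * a)"
      using assms l by (intro prob_walk_hits_nonpos_le) auto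
    then show ?thesis by (simp add: \<mu>_def mult_ac)
  qed
qed

lemma prob_walk_hits_nonpos_half_mgf:
  fixes p :: "nat \<Rightarrow> 'a::finite pmf"
  assumes "finite A" "distinct is" "set is \<subseteq> A" "\<forall>i\<in>set is. p i = Q"
    and \<rho>: "(\<Sum>v\<in>UNIV. pmf Q v * exp (- h v / 2)) \<le> 1"
  shows "measure_pmf.prob (Pi_pmf A d p) (walk_hits_nonpos is h a)
           \<le> (\<Sum>v\<in>UNIV. pmf Q v * exp (- h v / 2)) ^ a"
proof -
  define \<rho> where "\<rho> = (\<Sum>v\<in>UNIV. pmf Q v * exp (- h v / 2))"
  obtain v0 where "v0 \<in> set_pmf Q" using set_pmf_not_empty[of Q] by blast
  then have "\<rho> > 0"
    unfolding \<rho>_def by (intro sum_pos2[of UNIV v0]) (auto simp: pmf_positive)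
  then have "measure_pmf.prob (Pi_pmf A d p) (walk_hits_nonpos is h a) \<le> exp (- (- ln \<rho>) * a)"
    using assms by (intro prob_walk_hits_nonpos_le[where l = "1/2"]) (auto simp: \<rho>_def)
  also have "\<dots> = \<rho> ^ a" using \<open>\<rho> > 0\<close> by (simp add: exp_of_nat_mult mult.commute)
  finally show ?thesis by (simp add: \<rho>_def)
qed

lemma prob_llr_walk_hits_nonpos_pinsker:
  fixes p :: "nat \<Rightarrow> 'a::finite pmf"
  assumes "finite A" "distinct is" "set is \<subseteq> A" "\<forall>i\<in>set is. p i = Q"
    and pos: "\<And>y. pmf Q y > 0" "\<And>y. pmf Q' y > 0"
    and osc: "\<And>y y'. llr Q' Q y - llr Q' Q y' \<le> s"
  shows "measure_pmf.prob (Pi_pmf A d p) (walk_hits_nonpos is (llr Q' Q) a)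
           \<le> exp (- 2 * real a * (2 * (tv_dist Q Q')\<^sup>2)\<^sup>2 / s\<^sup>2)"
proof -
  have kl: "(\<Sum>y\<in>UNIV. pmf Q y * llr Q' Q y) = kl_div Q Q'"
    by (simp add: llr_def kl_div_def)
  have pinsker: "0 \<le> 2 * (tv_dist Q Q')\<^sup>2" "2 * (tv_dist Q Q')\<^sup>2 \<le> kl_div Q Q'"
    using pinsker_inequality[OF pos] by simp_all
  have "measure_pmf.prob (Pi_pmf A d p) (walk_hits_nonpos is (llr Q' Q) a)
          \<le> exp (- 2 * real a * (kl_div Q Q')\<^sup>2 / s\<^sup>2)"
    using prob_walk_hits_nonpos_hoeffding[where h = "llr Q' Q", OF assms(1-4) osc] pinsker
    by (simp add: kl)
  also have "\<dots> \<le> exp (- 2 * real a * (2 * (tv_dist Q Q')\<^sup>2)\<^sup>2 / s\<^sup>2)"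
  proof -
    have "(2 * (tv_dist Q Q')\<^sup>2)\<^sup>2 \<le> (kl_div Q Q')\<^sup>2"
      using pinsker by (intro power_mono) auto
    then have "2 * real a * (2 * (tv_dist Q Q')\<^sup>2)\<^sup>2 / s\<^sup>2 \<le> 2 * real a * (kl_div Q Q')\<^sup>2 / s\<^sup>2"
      by (intro divide_right_mono mult_left_mono) auto
    then show ?thesis by simp
  qed
  finally show ?thesis .
qed

lemma prob_llr_walk_hits_nonpos_bhattacharyya:
  fixes p :: "nat \<Rightarrow> 'a::finite pmf"
  assumes "finite A" "distinct is" "set is \<subseteq> A" "\<forall>i\<in>set is. p i = Q"
    and pos: "\<And>y. pmf Q y > 0" "\<And>y. pmf Q' y > 0"
  shows "measure_pmf.prob (Pi_pmf A d p) (walk_hits_nonpos is (llr Q' Q) a)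
           \<le> (1 - (tv_dist Q Q')\<^sup>2) powr (real a / 2)"
proof -
  define \<beta> where "\<beta> = bhattacharyya Q Q'"
  have "\<beta> > 0"
    unfolding \<beta>_def bhattacharyya_def using pos by (intro sum_pos) auto
  have \<beta>2: "\<beta>\<^sup>2 \<le> 1 - (tv_dist Q Q')\<^sup>2"
    unfolding \<beta>_def by (rule bhattacharyya_sq_le)
  then have "\<beta>\<^sup>2 \<le> 1"
    using zero_le_power2[of "tv_dist Q Q'"] by linarith
  then have "\<beta> \<le> 1"
    using power2_le_imp_le[of \<beta> 1] by simp
  have half_mgf: "(\<Sum>y\<in>UNIV. pmf Q y * exp (- llr Q' Q y / 2)) = \<beta>"
    unfolding \<beta>_def by (rule sum_pmf_exp_half_llr[OF pos])
  have "measure_pmf.prob (Pi_pmf A d p) (walk_hits_nonpos is (llr Q' Q) a) \<le> \<beta> ^ a"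
    using prob_walk_hits_nonpos_half_mgf[OF assms(1-4), of "llr Q' Q"] \<open>\<beta> \<le> 1\<close>
    unfolding half_mgf by blast
  also have "\<dots> = \<beta> powr real a"
    using \<open>\<beta> > 0\<close> by (simp add: powr_realpow)
  also have "\<dots> = (\<beta> powr 2) powr (real a / 2)"
    by (simp add: powr_powr)
  also have "\<dots> = (\<beta>\<^sup>2) powr (real a / 2)"
    using \<open>\<beta> > 0\<close> by (simp add: powr_numeral)
  also have "\<dots> \<le> (1 - (tv_dist Q Q')\<^sup>2) powr (real a / 2)"
    using \<beta>2 by (intro powr_mono2) auto
  finally show ?thesis .
qed

section \<open>The offline change-point estimator\<close>

lemma sum_nth_upt:
  assumes "m \<le> Suc n - k"
  shows "(\<Sum>j<m. f ([k..<Suc n] ! j)) = (\<Sum>i=k..<k+m. f i)"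
proof -
  have "(\<Sum>j<m. f ([k..<Suc n] ! j)) = (\<Sum>j<m. f (k + j))"
    using assms by (intro sum.cong) (auto simp del: upt_Suc)
  also have "\<dots> = (\<Sum>i=k..<k+m. f i)"
    by (simp add: sum.shift_bounds_nat_ivl[of f 0 k m, symmetric] lessThan_atLeast0 add.commute)
  finally show ?thesis .
qed

lemma sum_nth_rev_upt:
  assumes "m \<le> k - 1"
  shows "(\<Sum>j<m. f (rev [1..<k] ! j)) = (\<Sum>i=k-m..<k. f i)"
proof -
  have "(\<Sum>j<m. f (rev [1..<k] ! j)) = (\<Sum>j<m. f (k - Suc j))"
    using assms by (intro sum.cong) (auto simp: rev_nth intro!: arg_cong[where f = f])
  also have "\<dots> = (\<Sum>i=k-m..<k. f i)"
    by (rule sum.reindex_bij_witness[where i = "\<lambda>i. k - Suc i" and j = "\<lambda>j. k - Suc j"])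
       (use assms in auto)
  finally show ?thesis .
qed

lemma sum_atLeastAtMost_split:
  fixes f :: "nat \<Rightarrow> 'b::comm_monoid_add"
  assumes "k1 \<le> k2" "k2 \<le> Suc n"
  shows "(\<Sum>i=k1..n. f i) = (\<Sum>i=k1..<k2. f i) + (\<Sum>i=k2..n. f i)"
  using sum.atLeastLessThan_concat[OF assms, of f] by (simp add: atLeastLessThanSuc_atLeastAtMost)

lemma argmax_far_from_change_point:
  fixes h :: "'a \<Rightarrow> real" and y :: "nat \<Rightarrow> 'a"
  assumes kstar: "1 \<le> kstar" "kstar \<le> n" and k: "k \<in> {1..n}"
    and better: "(\<Sum>i=kstar..n. h (y i)) \<le> (\<Sum>i=k..n. h (y i))"
    and far: "k \<notin> {kstar - \<alpha>..kstar + \<alpha>}"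
  shows "y \<in> walk_hits_nonpos [kstar..<Suc n] h (Suc \<alpha>)
           \<union> walk_hits_nonpos (rev [1..<kstar]) (\<lambda>v. - h v) (Suc \<alpha>)"
proof -
  consider "k < kstar - \<alpha>" | "kstar + \<alpha> < k" using far by fastforce
  then show ?thesis
  proof cases
    case 1
    define m where "m = kstar - k"
    have m: "Suc \<alpha> \<le> m" "m \<le> length (rev [1..<kstar])" using 1 k by (auto simp: m_def)
    have "(\<Sum>j<m. - h (y (rev [1..<kstar] ! j))) = - (\<Sum>i=k..<kstar. h (y i))"
      using sum_nth_rev_upt[of m kstar "\<lambda>i. - h (y i)"] m 1 by (simp add: m_def sum_negf)
    also have "\<dots> \<le> 0"
      using better sum_atLeastAtMost_split[of k kstar n "\<lambda>i. h (y i)"] 1 kstar by simp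
    finally show ?thesis using m unfolding walk_hits_nonpos_def by blast
  next
    case 2
    define m where "m = k - kstar"
    have m: "Suc \<alpha> \<le> m" "m \<le> length [kstar..<Suc n]" using 2 k by (auto simp: m_def)
    have "(\<Sum>j<m. h (y ([kstar..<Suc n] ! j))) = (\<Sum>i=kstar..<k. h (y i))"
      using sum_nth_upt[of m n kstar "\<lambda>i. h (y i)"] m 2 k by (simp add: m_def del: upt_Suc)
    also have "\<dots> \<le> 0"
      using better sum_atLeastAtMost_split[of kstar k n "\<lambda>i. h (y i)"] 2 k by simp
    finally show ?thesis using m unfolding walk_hits_nonpos_def by blast
  qed
qed

lemma prob_cpd_argmax_far:
  fixes Q0 Q1 :: "'a::finite pmf" and khat :: "(nat \<Rightarrow> 'a) \<Rightarrow> nat"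
  assumes pos: "\<And>y. pmf Q0 y > 0" "\<And>y. pmf Q1 y > 0"
    and kstar: "1 \<le> kstar" "kstar \<le> n"
    and khat: "\<And>y. khat y \<in> {1..n} \<and>
                  (\<forall>k\<in>{1..n}. (\<Sum>i=k..n. llr Q0 Q1 (y i)) \<le> (\<Sum>i=khat y..n. llr Q0 Q1 (y i)))"
    and osc: "\<And>y y'. llr Q0 Q1 y - llr Q0 Q1 y' \<le> s"
  shows "measure_pmf.prob (Pi_pmf {1..n} d (\<lambda>i. if i < kstar then Q0 else Q1))
           {y. khat y \<notin> {kstar - \<alpha>..kstar + \<alpha>}}
         \<le> 2 * min (exp (- 2 * real (Suc \<alpha>) * (2 * (tv_dist Q0 Q1)\<^sup>2)\<^sup>2 / s\<^sup>2))
                   ((1 - (tv_dist Q0 Q1)\<^sup>2) powr (real (Suc \<alpha>) / 2))"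
    (is "measure_pmf.prob ?D ?far \<le> 2 * min ?hoeffding ?bhattacharyya")
proof -
  define R where "R = walk_hits_nonpos [kstar..<Suc n] (llr Q0 Q1) (Suc \<alpha>)"
  define L where "L = walk_hits_nonpos (rev [1..<kstar]) (llr Q1 Q0) (Suc \<alpha>)"
  have swap: "(\<lambda>v. - llr Q0 Q1 v) = llr Q1 Q0"
    using llr_swap[OF pos] by (simp add: fun_eq_iff)
  have right: "set [kstar..<Suc n] \<subseteq> {1..n}" "\<forall>i\<in>set [kstar..<Suc n]. (if i < kstar then Q0 else Q1) = Q1"
    using kstar by auto
  have left: "set (rev [1..<kstar]) \<subseteq> {1..n}" "\<forall>i\<in>set (rev [1..<kstar]). (if i < kstar then Q0 else Q1) = Q0"
    using kstar by auto
  have osc': "llr Q1 Q0 y - llr Q1 Q0 y' \<le> s" for y y'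
    using osc[of y' y] by (simp flip: swap)
  have "?far \<subseteq> R \<union> L"
  proof
    fix y assume "y \<in> ?far"
    with khat[of y] kstar show "y \<in> R \<union> L"
      unfolding R_def L_def swap[symmetric] by (intro argmax_far_from_change_point) auto
  qed
  then have "measure_pmf.prob ?D ?far \<le> measure_pmf.prob ?D (R \<union> L)"
    by (rule measure_pmf.finite_measure_mono) simp
  also have "\<dots> \<le> measure_pmf.prob ?D R + measure_pmf.prob ?D L"
    by (rule measure_Un_le) simp_all
  finally have "measure_pmf.prob ?D ?far \<le> measure_pmf.prob ?D R + measure_pmf.prob ?D L" .
  moreover have "measure_pmf.prob ?D R \<le> ?hoeffding" "measure_pmf.prob ?D R \<le> ?bhattacharyya"
    unfolding R_def tv_dist_commute[of Q0 Q1]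
    by (rule prob_llr_walk_hits_nonpos_pinsker[OF _ _ right pos(2,1) osc]
             prob_llr_walk_hits_nonpos_bhattacharyya[OF _ _ right pos(2,1)]; simp)+
  moreover have "measure_pmf.prob ?D L \<le> ?hoeffding" "measure_pmf.prob ?D L \<le> ?bhattacharyya"
    unfolding L_def
    by (rule prob_llr_walk_hits_nonpos_pinsker[OF _ _ left pos osc']
             prob_llr_walk_hits_nonpos_bhattacharyya[OF _ _ left pos]; simp)+
  ultimately show ?thesis by (auto simp: min_def)
qed

section \<open>Contraction of log-likelihood ratios under randomized response\<close>

lemma llr_bind_rr:
  "llr (bind_pmf P0 (rr \<epsilon>)) (bind_pmf P1 (rr \<epsilon>)) y
     = ln ((1 + (exp \<epsilon> - 1) * pmf P1 y) / (1 + (exp \<epsilon> - 1) * pmf P0 y))"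
  using rr_normalizer_pos[of \<epsilon>, where 'a='a] by (simp add: llr_def pmf_bind_rr_eq)

lemma tanh_half: "tanh (x / 2 :: real) = (exp x - 1) / (exp x + 1)"
proof -
  have "exp x + 1 > 0" "exp x + exp x * exp x > 0" by (simp_all add: add_pos_pos)
  then show ?thesis by (simp add: tanh_real_altdef exp_minus divide_simps)
qed

lemma abs_ln_rr_ratio_le:
  fixes a0 a1 E :: real
  assumes E: "E \<ge> 1" and a: "a0 \<in> {0..1}" "a1 \<in> {0..1}"
  shows "\<bar>ln ((1 + (E - 1) * a1) / (1 + (E - 1) * a0))\<bar> \<le> ln E"
proof -
  have bounds: "0 < 1 + (E - 1) * a \<and> ln (1 + (E - 1) * a) \<in> {0..ln E}" if "a \<in> {0..1}" for a
  proof -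
    have "1 \<le> 1 + (E - 1) * a" "1 + (E - 1) * a \<le> E"
      using that E mult_left_mono[of a 1 "E - 1"] by auto
    then show ?thesis by auto
  qed
  from bounds[OF a(1)] bounds[OF a(2)] show ?thesis
    by (auto simp: ln_div abs_le_iff)
qed

lemma rr_ratio_upper:
  fixes a0 a1 c m M :: real
  assumes "c \<ge> 0" "m \<le> 1" "1 \<le> M" "m < M" "a0 \<ge> 0"
    and "a1 \<le> M * a0" "a1 - m * a0 \<le> 1 - m"
  defines "al \<equiv> (1 - m) / (M - m)"
  shows "(1 + c * a1) / (1 + c * a0) \<le> (1 + c * M * al) / (1 + c * al)"
proof -
  have "al \<ge> 0" using assms by (simp add: al_def)
  have "(M - m) * (a1 - a0) = (M - 1) * (a1 - m * a0) + (1 - m) * (a1 - M * a0)"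
    by (simp add: algebra_simps)
  moreover have "(M - 1) * (a1 - m * a0) \<le> (M - 1) * (1 - m)"
    using assms by (intro mult_left_mono) auto
  moreover have "(1 - m) * (a1 - M * a0) \<le> 0"
    using assms by (intro mult_nonneg_nonpos) auto
  moreover have "(M - m) * (al * (M - 1)) = (M - 1) * (1 - m)"
    using \<open>m < M\<close> by (simp add: al_def)
  ultimately have "(M - m) * (a1 - a0) \<le> (M - m) * (al * (M - 1))" by linarith
  then have "0 \<le> c * (al * (M - 1) - (a1 - a0))"
    using \<open>m < M\<close> \<open>c \<ge> 0\<close> by simp
  moreover have "0 \<le> c * (c * al * (M * a0 - a1))"
    using assms \<open>al \<ge> 0\<close> by simp
  moreover have "(1 + c * M * al) * (1 + c * a0) - (1 + c * a1) * (1 + c * al)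
      = c * (al * (M - 1) - (a1 - a0)) + c * (c * al * (M * a0 - a1))"
    by (simp add: algebra_simps)
  ultimately have "(1 + c * a1) * (1 + c * al) \<le> (1 + c * M * al) * (1 + c * a0)"
    by linarith
  moreover have "1 + c * a0 > 0" "1 + c * al > 0"
    using assms \<open>al \<ge> 0\<close> by (simp_all add: add_pos_nonneg)
  ultimately show ?thesis
    by (simp add: divide_le_eq le_divide_eq mult.commute)
qed

lemma rr_ratio_lower:
  fixes a0 a1 c m M :: real
  assumes "c \<ge> 0" "m \<le> 1" "1 \<le> M" "m < M" "a0 \<ge> 0"
    and "m * a0 \<le> a1" "M * a0 - a1 \<le> M - 1"
  defines "be \<equiv> (M - 1) / (M - m)"
  shows "(1 + c * m * be) / (1 + c * be) \<le> (1 + c * a1) / (1 + c * a0)"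
proof -
  have "be \<ge> 0" using assms by (simp add: be_def)
  have "(M - m) * (a0 - a1) = (1 - m) * (M * a0 - a1) + (M - 1) * (m * a0 - a1)"
    by (simp add: algebra_simps)
  moreover have "(1 - m) * (M * a0 - a1) \<le> (1 - m) * (M - 1)"
    using assms by (intro mult_left_mono) auto
  moreover have "(M - 1) * (m * a0 - a1) \<le> 0"
    using assms by (intro mult_nonneg_nonpos) auto
  moreover have "(M - m) * (be * (1 - m)) = (1 - m) * (M - 1)"
    using \<open>m < M\<close> by (simp add: be_def)
  ultimately have "(M - m) * (a0 - a1) \<le> (M - m) * (be * (1 - m))" by linarith
  then have "0 \<le> c * (be * (1 - m) - (a0 - a1))"
    using \<open>m < M\<close> \<open>c \<ge> 0\<close> by simp
  moreover have "0 \<le> c * (c * be * (a1 - m * a0))"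
    using assms \<open>be \<ge> 0\<close> by simp
  moreover have "(1 + c * a1) * (1 + c * be) - (1 + c * m * be) * (1 + c * a0)
      = c * (be * (1 - m) - (a0 - a1)) + c * (c * be * (a1 - m * a0))"
    by (simp add: algebra_simps)
  ultimately have "(1 + c * m * be) * (1 + c * a0) \<le> (1 + c * a1) * (1 + c * be)"
    by linarith
  moreover have "1 + c * a0 > 0" "1 + c * be > 0"
    using assms \<open>be \<ge> 0\<close> by (simp_all add: add_pos_nonneg)
  ultimately show ?thesis
    by (simp add: divide_le_eq le_divide_eq mult.commute)
qed

lemma mobius_of_weights:
  fixes E x y :: real
  assumes "x > 0" "y > 0" "x + y = 1"
  shows "(E * (x / y) + 1) / (x / y + E) = (1 + (E - 1) * x) / (1 + (E - 1) * y)"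
proof -
  have "E * (x / y) + 1 = (E * x + y) / y" "x / y + E = (x + E * y) / y"
    using \<open>y > 0\<close> by (simp_all add: field_simps)
  then have "(E * (x / y) + 1) / (x / y + E) = (E * x + y) / (x + E * y)"
    using \<open>y > 0\<close> by simp
  also have "E * x + y = 1 + (E - 1) * x"
    unfolding left_diff_distrib using \<open>x + y = 1\<close> by linarith
  also have "x + E * y = 1 + (E - 1) * y"
    unfolding left_diff_distrib using \<open>x + y = 1\<close> by linarith
  finally show ?thesis .
qed

lemma ln_mobius_diff_le:
  fixes E w1 w2 :: real
  assumes E: "E > 1" and w: "0 < w2" "w2 \<le> w1"
  shows "ln ((E * w1 + 1) / (w1 + E)) - ln ((E * w2 + 1) / (w2 + E))
           \<le> (E - 1) / (E + 1) * (ln w1 - ln w2)"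
proof -
  define t where "t = (E - 1) / (E + 1)"
  define h where "h z = t * z - (ln (E * exp z + 1) - ln (exp z + E))" for z
  have slope: "E * w / (E * w + 1) - w / (w + E) \<le> t" if "w > 0" for w
  proof -
    have "E * w + 1 > 0" "w + E > 0" "E + 1 > 0" using E that by (auto intro: add_pos_pos)
    moreover have "(E - 1) * ((E * w + 1) * (w + E)) - (E * w * (w + E) - (E * w + 1) * w) * (E + 1)
                 = (E - 1) * E * (w - 1)\<^sup>2"
      by (simp add: algebra_simps power2_eq_square)
    moreover have "(E - 1) * E * (w - 1)\<^sup>2 \<ge> 0" using E by simp
    ultimately show ?thesis
      by (simp add: t_def diff_frac_eq divide_le_eq le_divide_eq mult.commute)
  qed
  have "h (ln w2) \<le> h (ln w1)"
  proof (rule DERIV_nonneg_imp_nondecreasing[where f = h])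
    show "ln w2 \<le> ln w1" using w by simp
    fix z :: real
    have pos: "E * exp z + 1 > 0" "exp z + E > 0" using E by (auto intro: add_pos_pos)
    have "DERIV h z :> t - (E * exp z / (E * exp z + 1) - exp z / (exp z + E))"
      unfolding h_def using pos by (auto intro!: derivative_eq_intros simp: divide_inverse)
    moreover have "0 \<le> t - (E * exp z / (E * exp z + 1) - exp z / (exp z + E))"
      using slope[of "exp z"] by simp
    ultimately show "\<exists>y. DERIV h z :> y \<and> 0 \<le> y" by blast
  qed
  then have "t * ln w2 - (ln (E * w2 + 1) - ln (w2 + E)) \<le> t * ln w1 - (ln (E * w1 + 1) - ln (w1 + E))"
    using w by (simp add: h_def)
  moreover have split: "ln ((E * w + 1) / (w + E)) = ln (E * w + 1) - ln (w + E)" if "w > 0" for w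
    using that E by (intro ln_divide_pos) (auto intro: add_pos_pos)
  moreover have "w1 > 0" using w by simp
  ultimately show ?thesis
    unfolding split[OF \<open>w1 > 0\<close>] split[OF w(1)] t_def[symmetric] by (simp add: right_diff_distrib)
qed

lemma ln_rr_extremes_diff_le:
  fixes E m M :: real
  assumes E: "E > 1" and m: "0 < m" "m < 1" and M: "1 < M"
  defines "al \<equiv> (1 - m) / (M - m)" and "be \<equiv> (M - 1) / (M - m)"
  shows "ln ((1 + (E - 1) * M * al) / (1 + (E - 1) * al)) - ln ((1 + (E - 1) * m * be) / (1 + (E - 1) * be))
           \<le> (E - 1) / (E + 1) * ln (M / m)"
proof -
  have "al > 0" "be > 0" using m M by (simp_all add: al_def be_def)
  have "M - m \<noteq> 0" using m M by simp
  have "al + be = ((1 - m) + (M - 1)) / (M - m)"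
    by (simp only: al_def be_def add_divide_distrib)
  also have "\<dots> = 1" using \<open>M - m \<noteq> 0\<close> by simp
  finally have "al + be = 1" .
  have "M * al + m * be = (M * (1 - m) + m * (M - 1)) / (M - m)"
    by (simp only: al_def be_def times_divide_eq_right add_divide_distrib)
  also have "\<dots> = 1" using \<open>M - m \<noteq> 0\<close> by (simp add: algebra_simps)
  finally have weights: "al + be = 1" "M * al + m * be = 1" using \<open>al + be = 1\<close> by simp_all
  (* Both extremes are values of the Moebius map w \<mapsto> (E * w + 1) / (w + E), whose logarithm
     is (E - 1) / (E + 1)-Lipschitz in ln w. *)
  define w1 where "w1 = M * al / (m * be)"
  define w2 where "w2 = al / be"
  have "0 < w2" "w2 \<le> w1"
    using \<open>al > 0\<close> \<open>be > 0\<close> m M by (auto simp: w1_def w2_def field_simps intro!: mult_right_mono)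
  have g1: "(E * w1 + 1) / (w1 + E) = (1 + (E - 1) * (M * al)) / (1 + (E - 1) * (m * be))"
    unfolding w1_def using weights \<open>al > 0\<close> \<open>be > 0\<close> m M by (intro mobius_of_weights) auto
  have g2: "(E * w2 + 1) / (w2 + E) = (1 + (E - 1) * al) / (1 + (E - 1) * be)"
    unfolding w2_def using weights \<open>al > 0\<close> \<open>be > 0\<close> by (intro mobius_of_weights) auto
  have pos: "1 + (E - 1) * M * al > 0" "1 + (E - 1) * al > 0" "1 + (E - 1) * m * be > 0" "1 + (E - 1) * be > 0"
    using E m M \<open>al > 0\<close> \<open>be > 0\<close> by (simp_all add: add_pos_pos)
  have "ln ((1 + (E - 1) * M * al) / (1 + (E - 1) * al)) - ln ((1 + (E - 1) * m * be) / (1 + (E - 1) * be))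
      = ln ((E * w1 + 1) / (w1 + E)) - ln ((E * w2 + 1) / (w2 + E))"
    using pos unfolding g1 g2 by (simp add: ln_div mult.assoc)
  also have "\<dots> \<le> (E - 1) / (E + 1) * (ln w1 - ln w2)"
    by (rule ln_mobius_diff_le[OF E \<open>0 < w2\<close> \<open>w2 \<le> w1\<close>])
  also have "ln w1 - ln w2 = ln (M / m)"
    using \<open>al > 0\<close> \<open>be > 0\<close> m M by (simp add: w1_def w2_def ln_div ln_mult)
  finally show ?thesis .
qed

lemma pmf_less_somewhere:
  fixes P Q :: "'a::finite pmf"
  assumes "P \<noteq> Q"
  shows "\<exists>x. pmf P x < pmf Q x"
proof (rule ccontr)
  assume "\<nexists>x. pmf P x < pmf Q x"
  then have le: "pmf Q x \<le> pmf P x" for x by (simp add: not_less)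
  obtain x where "pmf Q x \<noteq> pmf P x" using assms pmf_eqI by metis
  with le have "(\<Sum>x\<in>UNIV. pmf Q x) < (\<Sum>x\<in>UNIV. pmf P x)"
    by (intro sum_strict_mono_ex1) (auto intro: order.not_eq_order_implies_strict)
  then show False by (simp add: sum_pmf_eq_1)
qed

lemma llr_rr_contraction:
  fixes P0 P1 :: "'a::finite pmf" and E m M :: real
  assumes E: "E > 1" and m: "m > 0"
    and ratio: "\<And>x. m * pmf P0 x \<le> pmf P1 x \<and> pmf P1 x \<le> M * pmf P0 x"
  defines "r y \<equiv> (1 + (E - 1) * pmf P1 y) / (1 + (E - 1) * pmf P0 y)"
  shows "ln (r y) - ln (r y') \<le> (E - 1) / (E + 1) * ln (M / m)"
proof -
  have "pmf P1 y - m * pmf P0 y \<le> (\<Sum>x\<in>UNIV. pmf P1 x - m * pmf P0 x)"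
    and "M * pmf P0 y - pmf P1 y \<le> (\<Sum>x\<in>UNIV. M * pmf P0 x - pmf P1 x)" for y
    using ratio by (intro member_le_sum; auto)+
  then have slack: "pmf P1 y - m * pmf P0 y \<le> 1 - m" "M * pmf P0 y - pmf P1 y \<le> M - 1" for y
    by (simp_all add: sum_subtractf sum_pmf_eq_1 flip: sum_distrib_left)
  have pos: "0 < 1 + (E - 1) * pmf P y" for P :: "'a pmf" and y
    using E by (simp add: add_pos_nonneg)
  show ?thesis
  proof (cases "P0 = P1")
    case True
    have "m \<le> M" using ratio[of undefined] slack[of undefined] by linarith
    then have "0 \<le> ln (M / m)" using m by (simp add: le_divide_eq)
    moreover have "r z = 1" for z using True pos[of P1 z] by (simp add: r_def)
    ultimately show ?thesis using E by simp
  next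
    case False
    obtain x1 where x1: "pmf P1 x1 < pmf P0 x1" using pmf_less_somewhere False by metis
    obtain x2 where x2: "pmf P0 x2 < pmf P1 x2" using pmf_less_somewhere False by metis
    have "m * pmf P0 x1 < 1 * pmf P0 x1" using ratio[of x1] x1 by simp
    then have "m < 1" by (rule mult_right_less_imp_less) simp
    have "1 * pmf P0 x2 < M * pmf P0 x2" using ratio[of x2] x2 by simp
    then have "1 < M" by (rule mult_right_less_imp_less) simp
    (* The extremes of r are attained at (pmf P0 y, pmf P1 y) = (al, M * al) and (be, m * be),
       where al + be = 1 = M * al + m * be. *)
    define al where "al = (1 - m) / (M - m)"
    define be where "be = (M - 1) / (M - m)"
    have "r y \<le> (1 + (E - 1) * M * al) / (1 + (E - 1) * al)"
      unfolding r_def al_def using E \<open>m < 1\<close> \<open>1 < M\<close> ratio slack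
      by (intro rr_ratio_upper) auto
    moreover have "0 < r y" unfolding r_def using pos by (intro divide_pos_pos)
    ultimately have upper: "ln (r y) \<le> ln ((1 + (E - 1) * M * al) / (1 + (E - 1) * al))"
      by simp
    have "(1 + (E - 1) * m * be) / (1 + (E - 1) * be) \<le> r y'"
      unfolding r_def be_def using E \<open>m < 1\<close> \<open>1 < M\<close> ratio slack
      by (intro rr_ratio_lower) auto
    moreover have "0 < (1 + (E - 1) * m * be) / (1 + (E - 1) * be)"
      using E m \<open>m < 1\<close> \<open>1 < M\<close> by (simp add: be_def add_pos_pos)
    ultimately have lower: "ln ((1 + (E - 1) * m * be) / (1 + (E - 1) * be)) \<le> ln (r y')"
      by simp
    have "ln (r y) - ln (r y') \<le> ln ((1 + (E - 1) * M * al) / (1 + (E - 1) * al))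
        - ln ((1 + (E - 1) * m * be) / (1 + (E - 1) * be))"
      using upper lower by linarith
    also have "\<dots> \<le> (E - 1) / (E + 1) * ln (M / m)"
      unfolding al_def be_def using E m \<open>m < 1\<close> \<open>1 < M\<close> by (rule ln_rr_extremes_diff_le)
    finally show ?thesis .
  qed
qed

lemma llr_span_ratio_bounds:
  fixes P0 P1 :: "'a::finite pmf"
  assumes pos: "\<And>x. pmf P0 x > 0" "\<And>x. pmf P1 x > 0"
  defines "L \<equiv> \<lambda>x. ln (pmf P1 x / pmf P0 x)"
  shows "exp (Min (range L)) * pmf P0 x \<le> pmf P1 x \<and> pmf P1 x \<le> exp (Max (range L)) * pmf P0 x"
    and "llr_span P0 P1 = ln (exp (Max (range L)) / exp (Min (range L)))"
proof -
  have "pmf P1 x / pmf P0 x = exp (L x)" using pos[of x] by (simp add: L_def)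
  then have "exp (Min (range L)) \<le> pmf P1 x / pmf P0 x" "pmf P1 x / pmf P0 x \<le> exp (Max (range L))"
    by simp_all
  then show "exp (Min (range L)) * pmf P0 x \<le> pmf P1 x \<and> pmf P1 x \<le> exp (Max (range L)) * pmf P0 x"
    using pos[of x] by (simp add: le_divide_eq divide_le_eq)
  show "llr_span P0 P1 = ln (exp (Max (range L)) / exp (Min (range L)))"
    by (simp add: llr_span_def L_def ln_div)
qed

lemma llr_bind_rr_oscillation:
  fixes P0 P1 :: "'a::finite pmf"
  assumes pos: "\<And>x. pmf P0 x > 0" "\<And>x. pmf P1 x > 0" and "\<epsilon> > 0"
  defines "d \<equiv> llr (bind_pmf P0 (rr \<epsilon>)) (bind_pmf P1 (rr \<epsilon>))"
  shows "d y - d y' \<le> min (2 * \<epsilon>) (tanh (\<epsilon> / 2) * llr_span P0 P1)"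
proof -
  have E: "exp \<epsilon> > 1" using \<open>\<epsilon> > 0\<close> by simp
  have "\<bar>d z\<bar> \<le> \<epsilon>" for z
    using abs_ln_rr_ratio_le[of "exp \<epsilon>" "pmf P0 z" "pmf P1 z"] E
    by (simp add: d_def llr_bind_rr pmf_le_1)
  then have "d y - d y' \<le> 2 * \<epsilon>"
    using abs_le_D1 abs_le_D2 by (smt (verit))
  moreover have "d y - d y' \<le> tanh (\<epsilon> / 2) * llr_span P0 P1"
    unfolding d_def llr_bind_rr tanh_half llr_span_ratio_bounds(2)[OF pos]
    by (rule llr_rr_contraction[OF E exp_gt_zero llr_span_ratio_bounds(1)[OF pos]])
  ultimately show ?thesis by simp
qed

lemma rr_tv_term_bounds:
  fixes P0 P1 :: "'a::finite pmf"
  assumes "\<epsilon> \<ge> 0"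
  shows "0 \<le> 2 * ((exp \<epsilon> - 1) / (exp \<epsilon> + real CARD('a) - 1))\<^sup>2 * (tv_dist P0 P1)\<^sup>2"
    and "2 * ((exp \<epsilon> - 1) / (exp \<epsilon> + real CARD('a) - 1))\<^sup>2 * (tv_dist P0 P1)\<^sup>2 \<le> 2"
proof -
  have "(tv_dist (bind_pmf P0 (rr \<epsilon>)) (bind_pmf P1 (rr \<epsilon>)))\<^sup>2 \<le> 1"
    by (intro power_le_one tv_dist_nonneg tv_dist_le_1)
  then show "0 \<le> 2 * ((exp \<epsilon> - 1) / (exp \<epsilon> + real CARD('a) - 1))\<^sup>2 * (tv_dist P0 P1)\<^sup>2"
    and "2 * ((exp \<epsilon> - 1) / (exp \<epsilon> + real CARD('a) - 1))\<^sup>2 * (tv_dist P0 P1)\<^sup>2 \<le> 2"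
    unfolding tv_dist_bind_rr_sq[OF assms] by simp_all
qed

lemma prob_rr_cpd_argmax_far:
  fixes P0 P1 :: "'a::finite pmf" and khat :: "(nat \<Rightarrow> 'a) \<Rightarrow> nat"
  assumes supp: "set_pmf P0 = UNIV" "set_pmf P1 = UNIV" and eps: "\<epsilon> > 0"
    and kstar: "1 \<le> kstar" "kstar \<le> n"
    and khat_argmax: "\<And>y. khat y \<in> {1..n} \<and>
                         (\<forall>k\<in>{1..n}. cpd_score \<epsilon> P0 P1 n y k \<le> cpd_score \<epsilon> P0 P1 n y (khat y))"
  defines "Cr \<equiv> 2 * ((exp \<epsilon> - 1) / (exp \<epsilon> + real CARD('a) - 1))\<^sup>2 * (tv_dist P0 P1)\<^sup>2"
    and "sr \<equiv> min (2 * \<epsilon>) (tanh (\<epsilon> / 2) * llr_span P0 P1)"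
  shows "measure_pmf.prob (privatize n (rr \<epsilon>) (cp_data n kstar P0 P1))
           {y. khat y \<notin> {kstar - \<alpha>..kstar + \<alpha>}}
         \<le> 2 * min (exp (- 2 * real (Suc \<alpha>) * Cr\<^sup>2 / sr\<^sup>2)) ((1 - Cr / 2) powr (real (Suc \<alpha>) / 2))"
proof -
  define Q0 where "Q0 = bind_pmf P0 (rr \<epsilon>)"
  define Q1 where "Q1 = bind_pmf P1 (rr \<epsilon>)"
  have score: "cpd_score \<epsilon> P0 P1 n y k = (\<Sum>i=k..n. llr Q0 Q1 (y i))" for y k
    by (simp add: cpd_score_def llr_def Q0_def Q1_def pmf_bind_rr)
  have "measure_pmf.prob (privatize n (rr \<epsilon>) (cp_data n kstar P0 P1))
           {y. khat y \<notin> {kstar - \<alpha>..kstar + \<alpha>}}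
        \<le> 2 * min (exp (- 2 * real (Suc \<alpha>) * (2 * (tv_dist Q0 Q1)\<^sup>2)\<^sup>2 / sr\<^sup>2))
                  ((1 - (tv_dist Q0 Q1)\<^sup>2) powr (real (Suc \<alpha>) / 2))"
    unfolding privatize_cp_data Q0_def[symmetric] Q1_def[symmetric]
  proof (rule prob_cpd_argmax_far[OF _ _ kstar])
    show "pmf Q0 y > 0" "pmf Q1 y > 0" for y
      by (simp_all add: Q0_def Q1_def pmf_bind_rr_pos)
    show "khat y \<in> {1..n} \<and> (\<forall>k\<in>{1..n}. (\<Sum>i=k..n. llr Q0 Q1 (y i)) \<le> (\<Sum>i=khat y..n. llr Q0 Q1 (y i)))"
      for y using khat_argmax[of y] by (simp add: score)
    show "llr Q0 Q1 y - llr Q0 Q1 y' \<le> sr" for y y'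
      unfolding Q0_def Q1_def sr_def using supp eps
      by (intro llr_bind_rr_oscillation) (auto simp: pmf_positive)
  qed
  moreover have "Cr = 2 * (tv_dist Q0 Q1)\<^sup>2"
    using eps by (simp add: Cr_def Q0_def Q1_def tv_dist_bind_rr_sq)
  ultimately show ?thesis by simp
qed

lemma cpd_tail_bound_le_doubling_sum:
  fixes C s :: real
  assumes "1 \<le> N" "0 \<le> C" "C \<le> 2"
  shows "2 * min (exp (- 2 * real (Suc \<alpha>) * C\<^sup>2 / s\<^sup>2)) ((1 - C / 2) powr (real (Suc \<alpha>) / 2))
       \<le> 2 * min (\<Sum>i\<in>{1..N}. exp (- (2 ^ (i - 1) * real \<alpha> * C\<^sup>2) / s\<^sup>2)) ((1 - C / 2) powr (real \<alpha> / 2))"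
proof (intro mult_left_mono min.mono)
  have "- 2 * real (Suc \<alpha>) * (C\<^sup>2 / s\<^sup>2) \<le> - real \<alpha> * (C\<^sup>2 / s\<^sup>2)"
    by (intro mult_right_mono) auto
  then have "exp (- 2 * real (Suc \<alpha>) * C\<^sup>2 / s\<^sup>2) \<le> exp (- (2 ^ (1 - 1) * real \<alpha> * C\<^sup>2) / s\<^sup>2)"
    by simp
  also have "\<dots> \<le> (\<Sum>i\<in>{1..N}. exp (- (2 ^ (i - 1) * real \<alpha> * C\<^sup>2) / s\<^sup>2))"
    using assms by (intro member_le_sum) auto
  finally show "exp (- 2 * real (Suc \<alpha>) * C\<^sup>2 / s\<^sup>2) \<le> (\<Sum>i\<in>{1..N}. exp (- (2 ^ (i - 1) * real \<alpha> * C\<^sup>2) / s\<^sup>2))" .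
  show "(1 - C / 2) powr (real (Suc \<alpha>) / 2) \<le> (1 - C / 2) powr (real \<alpha> / 2)"
    using assms by (intro powr_mono') auto
qed simp

theorem theorem5p6:
  fixes P0 P1 :: "'a::finite pmf" and \<epsilon> :: real and n kstar \<alpha> :: nat
    and khat :: "(nat \<Rightarrow> 'a) \<Rightarrow> nat"
  assumes supp0: "set_pmf P0 = UNIV" and supp1: "set_pmf P1 = UNIV"
    and eps: "\<epsilon> > 0" and n: "n > 1" and kstar: "1 < kstar" "kstar \<le> n"
    and alpha: "1 \<le> \<alpha>" "\<alpha> \<le> n"
    and khat_argmax: "\<And>y. khat y \<in> {1..n} \<and>
                         (\<forall>k\<in>{1..n}. cpd_score \<epsilon> P0 P1 n y k \<le> cpd_score \<epsilon> P0 P1 n y (khat y))"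
  shows "ldp_mechanism \<epsilon> (rr \<epsilon> :: 'a \<Rightarrow> 'a pmf) \<and>
    (let \<beta>r = measure_pmf.prob (privatize n (rr \<epsilon>) (cp_data n kstar P0 P1))
                 {y. khat y \<notin> {kstar - \<alpha> .. kstar + \<alpha>}};
         s = llr_span P0 P1;
         sr = min (2 * \<epsilon>) (tanh (\<epsilon> / 2) * s);
         Cr = 2 * ((exp \<epsilon> - 1) / (exp \<epsilon> + real CARD('a) - 1))^2 * (tv_dist P0 P1)^2;
         istar = \<lceil>log 2 ((real n - 1) / real \<alpha>)\<rceil>
     in \<beta>r \<le> 2 * min (\<Sum>i\<in>{1..nat istar}. exp (- (2 ^ (i - 1) * real \<alpha> * Cr^2) / sr^2))
                      ((1 - Cr / 2) powr (real \<alpha> / 2)))"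
proof -
  define Cr where "Cr = 2 * ((exp \<epsilon> - 1) / (exp \<epsilon> + real CARD('a) - 1))\<^sup>2 * (tv_dist P0 P1)\<^sup>2"
  define sr where "sr = min (2 * \<epsilon>) (tanh (\<epsilon> / 2) * llr_span P0 P1)"
  define far where "far = {y. khat y \<notin> {kstar - \<alpha>..kstar + \<alpha>}}"
  define N where "N = nat \<lceil>log 2 ((real n - 1) / real \<alpha>)\<rceil>"
  have "0 \<le> Cr" "Cr \<le> 2"
    unfolding Cr_def using eps by (intro rr_tv_term_bounds; simp)+
  have "measure_pmf.prob (privatize n (rr \<epsilon>) (cp_data n kstar P0 P1)) far
      \<le> 2 * min (\<Sum>i\<in>{1..N}. exp (- (2 ^ (i - 1) * real \<alpha> * Cr\<^sup>2) / sr\<^sup>2)) ((1 - Cr / 2) powr (real \<alpha> / 2))"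
  proof (cases "n - 1 \<le> \<alpha>")
    case True
    then have "khat y \<in> {kstar - \<alpha>..kstar + \<alpha>}" for y
      using khat_argmax[of y] kstar by auto
    then have "far = {}" by (simp add: far_def)
    then show ?thesis by (simp add: sum_nonneg)
  next
    case False
    then have "0 < log 2 ((real n - 1) / real \<alpha>)" using alpha n by (simp add: field_simps)
    then have "1 \<le> N" unfolding N_def by linarith
    have "measure_pmf.prob (privatize n (rr \<epsilon>) (cp_data n kstar P0 P1)) far
        \<le> 2 * min (exp (- 2 * real (Suc \<alpha>) * Cr\<^sup>2 / sr\<^sup>2)) ((1 - Cr / 2) powr (real (Suc \<alpha>) / 2))"
      unfolding far_def Cr_def sr_def
      by (rule prob_rr_cpd_argmax_far[OF supp0 supp1 eps _ kstar(2) khat_argmax]) (use kstar in simp)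
    also have "\<dots> \<le> 2 * min (\<Sum>i\<in>{1..N}. exp (- (2 ^ (i - 1) * real \<alpha> * Cr\<^sup>2) / sr\<^sup>2))
                            ((1 - Cr / 2) powr (real \<alpha> / 2))"
      by (rule cpd_tail_bound_le_doubling_sum) fact+
    finally show ?thesis .
  qed
  moreover have "ldp_mechanism \<epsilon> (rr \<epsilon> :: 'a \<Rightarrow> 'a pmf)"
    using eps by (intro ldp_mechanism_rr) simp
  ultimately show ?thesis by (simp add: Let_def far_def sr_def Cr_def N_def)
qed

end
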